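(* Let $q\in\mathbb C$ with $|q|=1$, $q^2\neq1$, let $A,B$ be self-adjoint operators on a Hilbert space $\mathcal H$, and let $\lambda,\lambda q\in\rho(A)$, $\mu,\mu q\in\rho(B)$. Then (a) the operator inclusion $qR_{\lambda q}(A)B\subseteq BR_\lambda(A)$ holds if and only if $$R_\lambda(A)R_\mu(B)=qR_{\mu q}(B)R_{\lambda q}(A)+\mu\lambda q(q-1)R_{\mu q}(B)R_{\lambda q}(A)R_\lambda(A)R_\mu(B)$$ holds as an identity of bounded operators on $\mathcal H$; (b) the operator inclusion $R_\mu(B)A\subseteq qAR_{\mu q}(B)$ holds if and only if $$R_\lambda(A)R_\mu(B)=qR_{\mu q}(B)R_{\lambda q}(A)+\mu\lambda q(q-1)R_\lambda(A)R_\mu(B)R_{\mu q}(B)R_{\lambda q}(A)$$ holds on $\mathcal H$.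
   Context: $\rho(T)$ denotes the resolvent set and $R_\lambda(T)=(T-\lambda I)^{-1}$ the resolvent of a closed operator $T$. For operators $S,T$, $S\subseteq T$ means $T$ is an extension of $S$; products of unbounded operators have their natural domains. *)

theory Defs
  imports Complex_Main
begin

class cvec = ab_group_add +
  fixes scaleC :: "complex \<Rightarrow> 'a \<Rightarrow> 'a"
  assumes scaleC_add_right: "scaleC a (x + y) = scaleC a x + scaleC a y"
    and scaleC_add_left: "scaleC (a + b) x = scaleC a x + scaleC b x"
    and scaleC_scaleC: "scaleC a (scaleC b x) = scaleC (a * b) x"
    and scaleC_one: "scaleC 1 x = x"

class cinner_space = cvec +
  fixes cinner :: "'a \<Rightarrow> 'a \<Rightarrow> complex"
  assumes cinner_commute: "cinner x y = cnj (cinner y x)"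
    and cinner_add_left: "cinner (x + y) z = cinner x z + cinner y z"
    and cinner_scaleC_left: "cinner (scaleC a x) y = cnj a * cinner x y"
    and cinner_nonneg: "0 \<le> Re (cinner x x)"
    and cinner_eq_zero: "cinner x x = 0 \<longleftrightarrow> x = 0"

definition cnorm :: "'a::cinner_space \<Rightarrow> real" where
  "cnorm x = sqrt (Re (cinner x x))"

class chilbert = cinner_space +
  assumes cauchy_converges:
    "(\<forall>e>0. \<exists>N::nat. \<forall>m\<ge>N. \<forall>n\<ge>N. sqrt (Re (cinner (X m - X n) (X m - X n))) < e)
      \<Longrightarrow> (\<exists>L. \<forall>e>0. \<exists>N::nat. \<forall>n\<ge>N. sqrt (Re (cinner (X n - L) (X n - L))) < e)"

type_synonym 'a linop = "'a set \<times> ('a \<Rightarrow> 'a)"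

definition odom :: "'a linop \<Rightarrow> 'a set" where "odom T = fst T"
definition oapp :: "'a linop \<Rightarrow> 'a \<Rightarrow> 'a" where "oapp T = snd T"

text \<open>Extension: \<open>op_le S T\<close> means S \<subseteq> T (T extends S).\<close>
definition op_le :: "'a linop \<Rightarrow> 'a linop \<Rightarrow> bool" where
  "op_le S T \<longleftrightarrow> odom S \<subseteq> odom T \<and> (\<forall>x\<in>odom S. oapp S x = oapp T x)"

definition op_eq :: "'a linop \<Rightarrow> 'a linop \<Rightarrow> bool" where
  "op_eq S T \<longleftrightarrow> op_le S T \<and> op_le T S"

definition op_comp :: "'a linop \<Rightarrow> 'a linop \<Rightarrow> 'a linop" where
  "op_comp S T = ({x \<in> odom T. oapp T x \<in> odom S}, \<lambda>x. oapp S (oapp T x))"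

definition op_scale :: "complex \<Rightarrow> 'a::cvec linop \<Rightarrow> 'a linop" where
  "op_scale c T = (odom T, \<lambda>x. scaleC c (oapp T x))"

definition op_total :: "('a \<Rightarrow> 'a) \<Rightarrow> 'a linop" where
  "op_total f = (UNIV, f)"

definition linear_op :: "'a::cvec linop \<Rightarrow> bool" where
  "linear_op T \<longleftrightarrow> 0 \<in> odom T
     \<and> (\<forall>x\<in>odom T. \<forall>y\<in>odom T. x + y \<in> odom T \<and> oapp T (x + y) = oapp T x + oapp T y)
     \<and> (\<forall>c. \<forall>x\<in>odom T. scaleC c x \<in> odom T \<and> oapp T (scaleC c x) = scaleC c (oapp T x))"

definition densely_defined :: "'a::cinner_space linop \<Rightarrow> bool" where
  "densely_defined T \<longleftrightarrow> (\<forall>x. \<forall>e>0. \<exists>y\<in>odom T. cnorm (x - y) < e)"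

definition adjoint_op :: "'a::cinner_space linop \<Rightarrow> 'a linop" where
  "adjoint_op T =
     ({y. \<exists>z. \<forall>x\<in>odom T. cinner (oapp T x) y = cinner x z},
      \<lambda>y. THE z. \<forall>x\<in>odom T. cinner (oapp T x) y = cinner x z)"

definition self_adjoint :: "'a::cinner_space linop \<Rightarrow> bool" where
  "self_adjoint T \<longleftrightarrow> linear_op T \<and> densely_defined T \<and> op_eq T (adjoint_op T)"

definition resolvent_set :: "'a::cinner_space linop \<Rightarrow> complex set" where
  "resolvent_set T = {lam.
     bij_betw (\<lambda>x. oapp T x - scaleC lam x) (odom T) UNIV \<and>
     (\<exists>C. \<forall>y. cnorm (inv_into (odom T) (\<lambda>x. oapp T x - scaleC lam x) y) \<le> C * cnorm y)}"

definition resolvent :: "'a::cinner_space linop \<Rightarrow> complex \<Rightarrow> 'a \<Rightarrow> 'a" where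
  "resolvent T lam = inv_into (odom T) (\<lambda>x. oapp T x - scaleC lam x)"

end

theory Submission
  imports Defs
begin

text \<open>Only linearity of A and B and the four resolvent-set hypotheses enter (plus q \<noteq> 0
  for (b)). Fix x in dom B and put u = R_\<lambda>(A) x. By the first resolvent identity,
  q R_\<lambda>q(A) B x = w + \<mu>q u with w = q R_\<lambda>q(A) (B - \<mu>) x + \<mu>\<lambda>q(q - 1) R_\<lambda>q(A) u,
  so the inclusion at x says exactly (B - \<mu>q) u = w, i.e. u = R_\<mu>q(B) w; substituting
  x = R_\<mu>(B) y this is the resolvent relation at y. Part (b) is the same computation with
  the roles of the two factors exchanged.\<close>

interpretation cv: module "scaleC :: complex \<Rightarrow> 'a::cvec \<Rightarrow> 'a"
  by unfold_locales (auto simp: scaleC_add_right scaleC_add_left scaleC_scaleC scaleC_one)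

lemma linear_op_add:
  "linear_op T \<Longrightarrow> x \<in> odom T \<Longrightarrow> y \<in> odom T \<Longrightarrow>
     x + y \<in> odom T \<and> oapp T (x + y) = oapp T x + oapp T y"
  unfolding linear_op_def by blast

lemma linear_op_scaleC:
  "linear_op T \<Longrightarrow> x \<in> odom T \<Longrightarrow>
     scaleC c x \<in> odom T \<and> oapp T (scaleC c x) = scaleC c (oapp T x)"
  unfolding linear_op_def by blast

lemma linear_op_scaleC_odom_iff:
  assumes "linear_op T" "c \<noteq> 0"
  shows "scaleC c x \<in> odom T \<longleftrightarrow> x \<in> odom T"
proof
  assume "scaleC c x \<in> odom T"
  then have "scaleC (1 / c) (scaleC c x) \<in> odom T"
    using linear_op_scaleC[OF assms(1)] by blast
  then show "x \<in> odom T" using assms(2) by (simp add: cv.scale_scale)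
qed (use linear_op_scaleC[OF assms(1)] in blast)

lemma resolvent_in_odom: "lam \<in> resolvent_set T \<Longrightarrow> resolvent T lam y \<in> odom T"
  unfolding resolvent_set_def resolvent_def by (auto intro: inv_into_into simp: bij_betw_def)

lemma resolvent_inverse:
  "lam \<in> resolvent_set T \<Longrightarrow> oapp T (resolvent T lam y) - scaleC lam (resolvent T lam y) = y"
  unfolding resolvent_set_def resolvent_def by (auto intro!: f_inv_into_f simp: bij_betw_def)

lemma resolvent_eq_iff:
  assumes "lam \<in> resolvent_set T"
  shows "resolvent T lam y = x \<longleftrightarrow> x \<in> odom T \<and> oapp T x - scaleC lam x = y"
proof -
  have "x \<in> odom T \<Longrightarrow> resolvent T lam (oapp T x - scaleC lam x) = x"
    using assms unfolding resolvent_set_def resolvent_def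
    by (auto intro!: inv_into_f_f simp: bij_betw_def)
  then show ?thesis using resolvent_in_odom[OF assms] resolvent_inverse[OF assms] by blast
qed

lemma all_resolvent_iff:
  assumes "lam \<in> resolvent_set T"
  shows "(\<forall>y. P (resolvent T lam y) y) \<longleftrightarrow> (\<forall>x\<in>odom T. P x (oapp T x - scaleC lam x))"
  using resolvent_eq_iff[OF assms] by metis

lemma resolvent_linear:
  assumes "linear_op T" "lam \<in> resolvent_set T"
  shows "resolvent T lam (scaleC a y + scaleC b z) =
           scaleC a (resolvent T lam y) + scaleC b (resolvent T lam z)"
proof -
  let ?u = "resolvent T lam y" and ?v = "resolvent T lam z"
  have u: "?u \<in> odom T" and v: "?v \<in> odom T" using resolvent_in_odom[OF assms(2)] by auto
  have Tu: "oapp T ?u = y + scaleC lam ?u" and Tv: "oapp T ?v = z + scaleC lam ?v"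
    using resolvent_inverse[OF assms(2), of y] resolvent_inverse[OF assms(2), of z]
    by (auto simp: algebra_simps)
  have "scaleC a ?u + scaleC b ?v \<in> odom T \<and>
        oapp T (scaleC a ?u + scaleC b ?v) = scaleC a (oapp T ?u) + scaleC b (oapp T ?v)"
    using linear_op_scaleC[OF assms(1) u] linear_op_scaleC[OF assms(1) v]
      linear_op_add[OF assms(1)] by metis
  then show ?thesis
    unfolding resolvent_eq_iff[OF assms(2)]
    by (simp add: Tu Tv cv.scale_right_distrib cv.scale_scale algebra_simps)
qed

lemma resolvent_scaleC:
  "linear_op T \<Longrightarrow> lam \<in> resolvent_set T \<Longrightarrow>
     resolvent T lam (scaleC a y) = scaleC a (resolvent T lam y)"
  using resolvent_linear[of T lam a y 0 0] by simp

lemma resolvent_add: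
  "linear_op T \<Longrightarrow> lam \<in> resolvent_set T \<Longrightarrow>
     resolvent T lam (y + z) = resolvent T lam y + resolvent T lam z"
  using resolvent_linear[of T lam 1 y 1 z] by (simp add: scaleC_one)

lemma resolvent_diff:
  "linear_op T \<Longrightarrow> lam \<in> resolvent_set T \<Longrightarrow>
     resolvent T lam (y - z) = resolvent T lam y - resolvent T lam z"
  using resolvent_linear[of T lam 1 y "-1" z] by (simp add: scaleC_one cv.scale_minus_left)

lemma first_resolvent_identity:
  assumes "linear_op T" "a \<in> resolvent_set T" "b \<in> resolvent_set T"
  shows "resolvent T b z - resolvent T a z = scaleC (b - a) (resolvent T b (resolvent T a z))"
proof -
  let ?u = "resolvent T a z" and ?v = "resolvent T b z"
  have u: "?u \<in> odom T" and v: "?v \<in> odom T"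
    using resolvent_in_odom[OF assms(2)] resolvent_in_odom[OF assms(3)] by auto
  have Tu: "oapp T ?u = z + scaleC a ?u" and Tv: "oapp T ?v = z + scaleC b ?v"
    using resolvent_inverse[OF assms(2), of z] resolvent_inverse[OF assms(3), of z]
    by (auto simp: algebra_simps)
  have "- ?u \<in> odom T \<and> oapp T (- ?u) = - oapp T ?u"
    using linear_op_scaleC[OF assms(1) u, of "-1"] by (simp add: cv.scale_minus_left)
  then have "?v - ?u \<in> odom T \<and> oapp T (?v - ?u) = oapp T ?v - oapp T ?u"
    using linear_op_add[OF assms(1) v] by (metis diff_conv_add_uminus)
  then have "resolvent T b (scaleC (b - a) ?u) = ?v - ?u"
    unfolding resolvent_eq_iff[OF assms(3)]
    by (simp add: Tu Tv cv.scale_right_diff_distrib cv.scale_left_diff_distrib)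
  then show ?thesis using resolvent_scaleC[OF assms(1,3)] by simp
qed

lemma first_resolvent_identity':
  assumes "linear_op T" "a \<in> resolvent_set T" "b \<in> resolvent_set T"
  shows "resolvent T b z - resolvent T a z = scaleC (b - a) (resolvent T a (resolvent T b z))"
  using first_resolvent_identity[OF assms(1,3,2), of z]
  by (metis cv.scale_minus_left minus_diff_eq)

lemma op_le_scale_total_comp_iff:
  "op_le (op_comp (op_scale c (op_total F)) T) (op_comp T (op_total G)) \<longleftrightarrow>
     (\<forall>x\<in>odom T. G x \<in> odom T \<and> scaleC c (F (oapp T x)) = oapp T (G x))"
  unfolding op_le_def op_comp_def op_scale_def op_total_def odom_def oapp_def by auto

lemma op_le_total_comp_scale_iff:
  "op_le (op_comp (op_total F) T) (op_scale c (op_comp T (op_total G))) \<longleftrightarrow>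
     (\<forall>x\<in>odom T. G x \<in> odom T \<and> F (oapp T x) = scaleC c (oapp T (G x)))"
  unfolding op_le_def op_comp_def op_scale_def op_total_def odom_def oapp_def by auto

lemma left_intertwining_at_iff:
  assumes linA: "linear_op A"
    and rl: "lam \<in> resolvent_set A" and rlq: "lam * q \<in> resolvent_set A"
    and rmq: "mu * q \<in> resolvent_set B"
  shows "(resolvent A lam x \<in> odom B \<and>
            scaleC q (resolvent A (lam * q) (oapp B x)) = oapp B (resolvent A lam x))
         \<longleftrightarrow> resolvent A lam x = resolvent B (mu * q)
                (scaleC q (resolvent A (lam * q) (oapp B x - scaleC mu x))
                 + scaleC (mu * lam * q * (q - 1)) (resolvent A (lam * q) (resolvent A lam x)))"
proof -
  let ?u = "resolvent A lam x"
  let ?w = "scaleC q (resolvent A (lam * q) (oapp B x - scaleC mu x))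
            + scaleC (mu * lam * q * (q - 1)) (resolvent A (lam * q) ?u)"
  have "scaleC q (resolvent A (lam * q) (oapp B x))
        = scaleC q (resolvent A (lam * q) (oapp B x - scaleC mu x))
          + scaleC (q * mu) (resolvent A (lam * q) x)"
    using resolvent_add[OF linA rlq, of "oapp B x - scaleC mu x" "scaleC mu x"]
    by (simp add: resolvent_scaleC[OF linA rlq] cv.scale_right_distrib cv.scale_scale)
  also have "resolvent A (lam * q) x = ?u + scaleC (lam * q - lam) (resolvent A (lam * q) ?u)"
    using first_resolvent_identity[OF linA rl rlq, of x] by (simp add: algebra_simps)
  also have "scaleC q (resolvent A (lam * q) (oapp B x - scaleC mu x))
        + scaleC (q * mu) (?u + scaleC (lam * q - lam) (resolvent A (lam * q) ?u))
        = ?w + scaleC (mu * q) ?u"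
    by (simp add: cv.scale_right_distrib cv.scale_scale algebra_simps)
  finally have "scaleC q (resolvent A (lam * q) (oapp B x)) = ?w + scaleC (mu * q) ?u" .
  then show ?thesis
    using resolvent_eq_iff[OF rmq] diff_eq_eq by metis
qed

lemma right_intertwining_at_iff:
  assumes linA: "linear_op A" and linB: "linear_op B" and "q \<noteq> 0"
    and rl: "lam \<in> resolvent_set A"
    and rm: "mu \<in> resolvent_set B" and rmq: "mu * q \<in> resolvent_set B"
  shows "(resolvent B (mu * q) x \<in> odom A \<and>
            resolvent B mu (oapp A x) = scaleC q (oapp A (resolvent B (mu * q) x)))
         \<longleftrightarrow> resolvent A lam (resolvent B mu (oapp A x - scaleC (lam * q) x)
                 - scaleC (mu * lam * q * (q - 1)) (resolvent B mu (resolvent B (mu * q) x)))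
               = scaleC q (resolvent B (mu * q) x)"
proof -
  let ?v = "resolvent B (mu * q) x"
  let ?z = "resolvent B mu (oapp A x - scaleC (lam * q) x)
            - scaleC (mu * lam * q * (q - 1)) (resolvent B mu ?v)"
  have "resolvent B mu (oapp A x)
        = resolvent B mu (oapp A x - scaleC (lam * q) x) + scaleC (lam * q) (resolvent B mu x)"
    using resolvent_add[OF linB rm, of "oapp A x - scaleC (lam * q) x" "scaleC (lam * q) x"]
    by (simp add: resolvent_scaleC[OF linB rm])
  also have "resolvent B mu x = ?v - scaleC (mu * q - mu) (resolvent B mu ?v)"
    using first_resolvent_identity'[OF linB rm rmq, of x] by (simp add: algebra_simps)
  also have "resolvent B mu (oapp A x - scaleC (lam * q) x)
        + scaleC (lam * q) (?v - scaleC (mu * q - mu) (resolvent B mu ?v))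
        = ?z + scaleC (lam * q) ?v"
    by (simp add: cv.scale_right_diff_distrib cv.scale_scale algebra_simps)
  finally have key: "resolvent B mu (oapp A x) = ?z + scaleC (lam * q) ?v" .
  show ?thesis
  proof (cases "?v \<in> odom A")
    case True
    then show ?thesis
      using linear_op_scaleC[OF linA True, of q]
      by (auto simp: key resolvent_eq_iff[OF rl] cv.scale_scale mult.commute algebra_simps)
  qed (auto simp: resolvent_eq_iff[OF rl] linear_op_scaleC_odom_iff[OF linA \<open>q \<noteq> 0\<close>])
qed

lemma left_intertwining_iff_resolvent_relation:
  assumes linA: "linear_op A" and linB: "linear_op B"
    and rl: "lam \<in> resolvent_set A" and rlq: "lam * q \<in> resolvent_set A"
    and rm: "mu \<in> resolvent_set B" and rmq: "mu * q \<in> resolvent_set B"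
  shows "(\<forall>x\<in>odom B. resolvent A lam x \<in> odom B \<and>
            scaleC q (resolvent A (lam * q) (oapp B x)) = oapp B (resolvent A lam x))
         \<longleftrightarrow> (\<forall>y. resolvent A lam (resolvent B mu y) =
              scaleC q (resolvent B (mu * q) (resolvent A (lam * q) y))
              + scaleC (mu * lam * q * (q - 1))
                  (resolvent B (mu * q) (resolvent A (lam * q)
                     (resolvent A lam (resolvent B mu y)))))"
    (is "_ \<longleftrightarrow> ?relation")
proof -
  have "?relation \<longleftrightarrow> (\<forall>y. resolvent A lam (resolvent B mu y) = resolvent B (mu * q)
          (scaleC q (resolvent A (lam * q) y)
           + scaleC (mu * lam * q * (q - 1)) (resolvent A (lam * q) (resolvent A lam (resolvent B mu y)))))"
    by (simp add: resolvent_linear[OF linB rmq])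
  also have "\<dots> \<longleftrightarrow> (\<forall>x\<in>odom B. resolvent A lam x = resolvent B (mu * q)
          (scaleC q (resolvent A (lam * q) (oapp B x - scaleC mu x))
           + scaleC (mu * lam * q * (q - 1)) (resolvent A (lam * q) (resolvent A lam x))))"
    by (rule all_resolvent_iff[OF rm])
  finally show ?thesis
    using left_intertwining_at_iff[OF linA rl rlq rmq] by simp
qed

lemma right_intertwining_iff_resolvent_relation:
  assumes linA: "linear_op A" and linB: "linear_op B" and q: "q \<noteq> 0"
    and rl: "lam \<in> resolvent_set A" and rlq: "lam * q \<in> resolvent_set A"
    and rm: "mu \<in> resolvent_set B" and rmq: "mu * q \<in> resolvent_set B"
  shows "(\<forall>x\<in>odom A. resolvent B (mu * q) x \<in> odom A \<and>
            resolvent B mu (oapp A x) = scaleC q (oapp A (resolvent B (mu * q) x)))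
         \<longleftrightarrow> (\<forall>y. resolvent A lam (resolvent B mu y) =
              scaleC q (resolvent B (mu * q) (resolvent A (lam * q) y))
              + scaleC (mu * lam * q * (q - 1))
                  (resolvent A lam (resolvent B mu
                     (resolvent B (mu * q) (resolvent A (lam * q) y)))))"
    (is "_ \<longleftrightarrow> ?relation")
proof -
  have "?relation \<longleftrightarrow> (\<forall>x\<in>odom A.
          resolvent A lam (resolvent B mu (oapp A x - scaleC (lam * q) x)) =
            scaleC q (resolvent B (mu * q) x)
            + scaleC (mu * lam * q * (q - 1)) (resolvent A lam (resolvent B mu (resolvent B (mu * q) x))))"
    by (rule all_resolvent_iff[OF rlq])
  then show ?thesis
    using right_intertwining_at_iff[OF linA linB q rl rm rmq]
    by (simp add: resolvent_diff[OF linA rl] resolvent_scaleC[OF linA rl] diff_eq_eq)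
qed

theorem mainTheorem4:
  fixes q lam mu :: complex and A B :: "'a::chilbert linop"
  assumes "cmod q = 1" and "q ^ 2 \<noteq> 1"
    and "self_adjoint A" and "self_adjoint B"
    and "lam \<in> resolvent_set A" and "lam * q \<in> resolvent_set A"
    and "mu \<in> resolvent_set B" and "mu * q \<in> resolvent_set B"
  shows
    "(op_le (op_comp (op_scale q (op_total (resolvent A (lam * q)))) B)
            (op_comp B (op_total (resolvent A lam)))
      \<longleftrightarrow> (\<forall>x. resolvent A lam (resolvent B mu x) =
              scaleC q (resolvent B (mu * q) (resolvent A (lam * q) x))
              + scaleC (mu * lam * q * (q - 1))
                  (resolvent B (mu * q) (resolvent A (lam * q)
                     (resolvent A lam (resolvent B mu x))))))
     \<and>
     (op_le (op_comp (op_total (resolvent B mu)) A)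
            (op_scale q (op_comp A (op_total (resolvent B (mu * q)))))
      \<longleftrightarrow> (\<forall>x. resolvent A lam (resolvent B mu x) =
              scaleC q (resolvent B (mu * q) (resolvent A (lam * q) x))
              + scaleC (mu * lam * q * (q - 1))
                  (resolvent A lam (resolvent B mu
                     (resolvent B (mu * q) (resolvent A (lam * q) x))))))"
proof -
  have linA: "linear_op A" and linB: "linear_op B"
    using assms(3,4) unfolding self_adjoint_def by auto
  have "q \<noteq> 0" using assms(1) by auto
  then show ?thesis
    unfolding op_le_scale_total_comp_iff op_le_total_comp_scale_iff
    using left_intertwining_iff_resolvent_relation[OF linA linB assms(5-8)]
      right_intertwining_iff_resolvent_relation[OF linA linB _ assms(5-8)]
    by blast
qed

end
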